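(* Let $u$ be the solution of the Cauchy problem in the context. Then for every $t>0$ and all $x\in[0,1]$, \[ 0\le\partial_xu(x,t)\le e^{(\sigma-m_0f_0-m_1f_1)t}. \]
   Context: Constants: $f_0>0$, $f_1\ge0$ with selection rate $\sigma=f_0-f_1>0$; $\lambda_0,\lambda_1\ge0$; $\gamma_0,\gamma_1\in(0,1]$; $m_0=\lambda_0\gamma_0$, $m_1=\lambda_1\gamma_1$. With $\mathcal{J}_0u(x,t)=u(x+\gamma_0(1-x),t)-u(x,t)$ and $\mathcal{J}_1u(x,t)=u(x-\gamma_1x,t)-u(x,t)$, $u$ is the unique (mild) solution, which is $C^\infty$ on $[0,1]\times[0,\infty)$, of \[ \partial_tu+\sigma(1-x)x\,\partial_xu=\lambda_0f_0\mathcal{J}_0u+\lambda_1f_1\mathcal{J}_1u\ (0\le x\le1,\ t>0),\quad u(x,0)=x. \] *)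

theory Defs
  imports "HOL-Analysis.Analysis"
begin

definition dom01 :: "(real \<times> real) set" where
  "dom01 = {0..1} \<times> {0..}"

definition J0 :: "real \<Rightarrow> (real \<Rightarrow> real \<Rightarrow> real) \<Rightarrow> real \<Rightarrow> real \<Rightarrow> real" where
  "J0 g0 u x t = u (x + g0 * (1 - x)) t - u x t"

definition J1 :: "real \<Rightarrow> (real \<Rightarrow> real \<Rightarrow> real) \<Rightarrow> real \<Rightarrow> real \<Rightarrow> real" where
  "J1 g1 u x t = u (x - g1 * x) t - u x t"

text \<open>
  u is a (classical) solution of the Cauchy problem which is C^2 on [0,1] x [0,infinity)
  (the paper's solution is C^infinity there).  ux, ut are its partial derivatives,
  uxx, uxt the second partial derivatives of ux; all derivatives are taken jointly
  (Frechet) in (x,t), one-sidedly at the boundary, i.e. within dom01.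
\<close>
definition classical_solution ::
  "real \<Rightarrow> real \<Rightarrow> real \<Rightarrow> real \<Rightarrow> real \<Rightarrow> real \<Rightarrow>
   (real \<Rightarrow> real \<Rightarrow> real) \<Rightarrow> (real \<Rightarrow> real \<Rightarrow> real) \<Rightarrow> (real \<Rightarrow> real \<Rightarrow> real) \<Rightarrow>
   (real \<Rightarrow> real \<Rightarrow> real) \<Rightarrow> (real \<Rightarrow> real \<Rightarrow> real) \<Rightarrow> bool" where
  "classical_solution f0 f1 l0 l1 g0 g1 u ux ut uxx uxt \<longleftrightarrow>
     (\<forall>(x,t)\<in>dom01.
        ((\<lambda>p. u (fst p) (snd p)) has_derivative (\<lambda>(h,k). ux x t * h + ut x t * k))
          (at (x,t) within dom01)
      \<and> ((\<lambda>p. ux (fst p) (snd p)) has_derivative (\<lambda>(h,k). uxx x t * h + uxt x t * k))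
          (at (x,t) within dom01))
   \<and> continuous_on dom01 (\<lambda>p. ut (fst p) (snd p))
   \<and> continuous_on dom01 (\<lambda>p. uxx (fst p) (snd p))
   \<and> continuous_on dom01 (\<lambda>p. uxt (fst p) (snd p))
   \<and> (\<forall>x\<in>{0..1}. \<forall>t>0.
        ut x t + (f0 - f1) * (1 - x) * x * ux x t
          = l0 * f0 * J0 g0 u x t + l1 * f1 * J1 g1 u x t)
   \<and> (\<forall>x\<in>{0..1}. u x 0 = x)"

end

(*
  Write rate = \<sigma> - m0 f0 - m1 f1 and, for p \<ge> 0 and p + s \<ge> 0,
    gap p s x y t = p e^(rate t) (y - x) + s (u y t - u x t).
  On the triangle 0 \<le> x \<le> y \<le> 1 this is nonnegative: it equals (p + s)(y - x) at t = 0
  and vanishes on the diagonal, so by a minimum principle it suffices that its time derivative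
  is nonnegative at a point (x, y) with x < y minimising gap over the triangle. There the
  first-order conditions in x (unless x = 0) and in y (unless y = 1) cancel the drift terms,
  and the PDE turns the time derivative into
    p e^(rate t) \<sigma> (y - x)(2 - x - y) + \<lambda>0 f0 (gap at the J0-jumped points - gap)
                                      + \<lambda>1 f1 (gap at the J1-jumped points - gap),
  which is nonnegative because both jumps map the triangle into itself.
  With (p, s) = (0, 1) and (1, -1), u(., t) and e^(rate t) x - u x t are nondecreasing in x,
  which gives 0 \<le> \<partial>x u \<le> e^(rate t).
*)

theory Submission
  imports Defs
begin

lemma mono_on_imp_deriv_within_nonneg:
  fixes f :: "real \<Rightarrow> real"
  assumes mono: "mono_on S f" and deriv: "(f has_real_derivative D) (at x within S)"
    and "x \<in> S" and nontriv: "at x within S \<noteq> bot"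
  shows "0 \<le> D"
proof (rule tendsto_lowerbound[OF _ _ nontriv])
  show "((\<lambda>y. (f y - f x) / (y - x)) \<longlongrightarrow> D) (at x within S)"
    using deriv has_field_derivative_iff by blast
  show "\<forall>\<^sub>F y in at x within S. 0 \<le> (f y - f x) / (y - x)"
    unfolding eventually_at_filter
  proof (intro always_eventually allI impI)
    fix y assume "y \<noteq> x" "y \<in> S"
    then show "0 \<le> (f y - f x) / (y - x)"
      using mono_onD[OF mono] \<open>x \<in> S\<close>
      by (cases y x rule: linorder_cases) (auto intro: divide_nonpos_neg divide_nonneg_pos)
  qed
qed

lemma has_real_derivative_partial_fst:
  fixes f :: "real \<Rightarrow> real \<Rightarrow> real"
  assumes "((\<lambda>p. f (fst p) (snd p)) has_derivative (\<lambda>(h, k). a * h + b * k)) (at (x, t) within S)"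
    and "(\<lambda>\<xi>. (\<xi>, t)) ` A \<subseteq> S"
  shows "((\<lambda>\<xi>. f \<xi> t) has_real_derivative a) (at x within A)"
proof -
  have "((\<lambda>\<xi>. (\<xi>, t)) has_derivative (\<lambda>h. (h, 0))) (at x within A)"
    by (auto intro!: derivative_eq_intros)
  from diff_chain_within[OF this has_derivative_subset[OF assms]]
  show ?thesis by (simp add: o_def has_field_derivative_def mult_commute_abs)
qed

lemma has_real_derivative_partial_snd:
  fixes f :: "real \<Rightarrow> real \<Rightarrow> real"
  assumes "((\<lambda>p. f (fst p) (snd p)) has_derivative (\<lambda>(h, k). a * h + b * k)) (at (x, t) within S)"
    and "Pair x ` A \<subseteq> S"
  shows "((\<lambda>s. f x s) has_real_derivative b) (at t within A)"
proof -
  have "(Pair x has_derivative (\<lambda>k. (0, k))) (at t within A)"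
    by (auto intro!: derivative_eq_intros)
  from diff_chain_within[OF this has_derivative_subset[OF assms]]
  show ?thesis by (simp add: o_def has_field_derivative_def mult_commute_abs)
qed

lemma negative_earlier_if_continuous:
  fixes g :: "real \<Rightarrow> real"
  assumes "continuous_on {0..t} g" and "0 < t" and "g t < 0"
  shows "\<exists>s\<in>{0..<t}. g s < 0"
proof (rule ccontr)
  assume "\<not> ?thesis"
  then have "\<And>s. s \<in> {0..<t} \<Longrightarrow> 0 \<le> g s" by (simp add: not_less)
  moreover have "closure {0..<t} = {0..t}" using assms(2) by simp
  ultimately have "0 \<le> g t"
    using continuous_ge_on_closure[of "{0..<t}" g t 0] assms(1,2) by simp
  then show False using assms(3) by simp
qed

lemma negative_earlier_if_deriv_pos:
  fixes g :: "real \<Rightarrow> real"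
  assumes "(g has_real_derivative D) (at t)" and "0 < D" and "0 < t" and "g t \<le> 0"
  shows "\<exists>s\<in>{0..<t}. g s < 0"
proof -
  obtain d where "d > 0" and dec: "\<And>h. 0 < h \<Longrightarrow> h < d \<Longrightarrow> g (t - h) < g t"
    using DERIV_pos_inc_left[OF assms(1,2)] by blast
  let ?h = "min d t / 2"
  have "g (t - ?h) < 0" using dec[of ?h] \<open>d > 0\<close> assms(3,4) by fastforce
  then show ?thesis using \<open>d > 0\<close> assms(3) by (intro bexI[of _ "t - ?h"]) auto
qed

definition triangle_prism :: "(real \<times> real \<times> real) set" where
  "triangle_prism = {(x, y, t). 0 \<le> x \<and> x \<le> y \<and> y \<le> 1 \<and> 0 \<le> t}"

lemma closed_triangle_prism: "closed triangle_prism"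
proof -
  have "triangle_prism =
      {q. 0 \<le> fst q \<and> fst q \<le> fst (snd q) \<and> fst (snd q) \<le> 1 \<and> 0 \<le> snd (snd q)}"
    unfolding triangle_prism_def by auto
  also have "closed \<dots>"
    by (intro closed_Collect_conj closed_Collect_le continuous_intros)
  finally show ?thesis .
qed

lemma earliest_nonpositive_point:
  fixes \<Psi> :: "real \<times> real \<times> real \<Rightarrow> real"
  assumes cont: "continuous_on triangle_prism \<Psi>"
    and "q0 \<in> triangle_prism" and "\<Psi> q0 \<le> 0"
  obtains x y t where "(x, y, t) \<in> triangle_prism" and "\<Psi> (x, y, t) \<le> 0"
    and "\<And>x' y' s. (x', y', s) \<in> triangle_prism \<Longrightarrow> s < t \<Longrightarrow> 0 < \<Psi> (x', y', s)"
proof -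
  define K where "K = {q \<in> triangle_prism \<inter> {q. snd (snd q) \<le> snd (snd q0)}. \<Psi> q \<le> 0}"
  have "closed K"
    unfolding K_def
    by (intro continuous_on_closed_Collect_le closed_Int closed_triangle_prism closed_Collect_le
        continuous_intros continuous_on_subset[OF cont]) auto
  moreover have "K \<subseteq> {0..1} \<times> {0..1} \<times> {0..snd (snd q0)}"
    unfolding K_def triangle_prism_def by auto
  ultimately have "compact K"
    using compact_Int_closed[of "{0..1} \<times> {0..1} \<times> {0..snd (snd q0)}" K]
    by (simp add: compact_Times Int_absorb1)
  moreover have "q0 \<in> K" using assms(2,3) unfolding K_def by auto
  ultimately obtain q where "q \<in> K" and earliest: "\<And>q'. q' \<in> K \<Longrightarrow> snd (snd q) \<le> snd (snd q')"
    using continuous_attains_inf[OF \<open>compact K\<close>, of "\<lambda>q. snd (snd q)"]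
    by (force intro: continuous_intros)
  obtain x y t where q: "q = (x, y, t)" by (cases q)
  show ?thesis
  proof (rule that)
    show "(x, y, t) \<in> triangle_prism" "\<Psi> (x, y, t) \<le> 0" using \<open>q \<in> K\<close> q K_def by auto
    show "0 < \<Psi> (x', y', s)" if "(x', y', s) \<in> triangle_prism" "s < t" for x' y' s
    proof (rule ccontr)
      assume "\<not> 0 < \<Psi> (x', y', s)"
      moreover have "t \<le> snd (snd q0)" using \<open>q \<in> K\<close> q K_def by auto
      ultimately have "(x', y', s) \<in> K" using that K_def by auto
      then show False using earliest[of "(x', y', s)"] that q by simp
    qed
  qed
qed

lemma nonneg_by_minimum_principle:
  fixes \<Phi> :: "real \<Rightarrow> real \<Rightarrow> real \<Rightarrow> real"
  assumes cont: "continuous_on triangle_prism (\<lambda>(x, y, t). \<Phi> x y t)"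
    and initial: "\<And>x y. 0 \<le> x \<Longrightarrow> x \<le> y \<Longrightarrow> y \<le> 1 \<Longrightarrow> 0 \<le> \<Phi> x y 0"
    and diagonal: "\<And>x t. 0 \<le> x \<Longrightarrow> x \<le> 1 \<Longrightarrow> 0 \<le> t \<Longrightarrow> 0 \<le> \<Phi> x x t"
    and at_min: "\<And>x y t. 0 \<le> x \<Longrightarrow> x < y \<Longrightarrow> y \<le> 1 \<Longrightarrow> 0 < t \<Longrightarrow>
       (\<And>x' y'. 0 \<le> x' \<Longrightarrow> x' \<le> y' \<Longrightarrow> y' \<le> 1 \<Longrightarrow> \<Phi> x y t \<le> \<Phi> x' y' t) \<Longrightarrow>
       \<exists>D\<ge>0. ((\<lambda>s. \<Phi> x y s) has_real_derivative D) (at t)"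
    and "(x0, y0, t0) \<in> triangle_prism"
  shows "0 \<le> \<Phi> x0 y0 t0"
proof (rule ccontr)
  assume "\<not> 0 \<le> \<Phi> x0 y0 t0"
  \<comment> \<open>The perturbation \<open>\<epsilon> e^t\<close> makes the time derivative strictly positive at the earliest point
    where \<open>\<Phi> + \<epsilon> e^t \<le> 0\<close>, so that point cannot be the earliest one.\<close>
  define \<epsilon> where "\<epsilon> = - \<Phi> x0 y0 t0 / (2 * exp t0)"
  have "\<epsilon> > 0" and "\<Phi> x0 y0 t0 + \<epsilon> * exp t0 < 0"
    using \<open>\<not> 0 \<le> \<Phi> x0 y0 t0\<close> by (auto simp: \<epsilon>_def divide_neg_pos)
  define \<Psi> where "\<Psi> = (\<lambda>(x, y, t). \<Phi> x y t + \<epsilon> * exp t)"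
  have \<Psi>_cont: "continuous_on triangle_prism \<Psi>"
    using cont unfolding \<Psi>_def split_def by (intro continuous_intros)
  have "\<Psi> (x0, y0, t0) \<le> 0" using \<open>\<Phi> x0 y0 t0 + \<epsilon> * exp t0 < 0\<close> unfolding \<Psi>_def by simp
  obtain x y t where "(x, y, t) \<in> triangle_prism" and "\<Psi> (x, y, t) \<le> 0"
    and no_earlier: "\<And>x' y' s. (x', y', s) \<in> triangle_prism \<Longrightarrow> s < t \<Longrightarrow> 0 < \<Psi> (x', y', s)"
    by (rule earliest_nonpositive_point[OF \<Psi>_cont assms(5) \<open>\<Psi> (x0, y0, t0) \<le> 0\<close>]) blast
  then have xyt: "0 \<le> x" "x \<le> y" "y \<le> 1" "0 \<le> t" unfolding triangle_prism_def by auto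
  have "0 < \<epsilon> * exp t" using \<open>\<epsilon> > 0\<close> by simp
  then have "\<Phi> x y t < 0" using \<open>\<Psi> (x, y, t) \<le> 0\<close> unfolding \<Psi>_def by simp
  have "0 < t" using initial[of x y] xyt \<open>\<Phi> x y t < 0\<close> by (cases "t = 0") auto
  have "x < y" using diagonal[of x t] xyt \<open>\<Phi> x y t < 0\<close> by (cases "x = y") auto
  have "\<Phi> x y t \<le> \<Phi> x' y' t" if "0 \<le> x'" "x' \<le> y'" "y' \<le> 1" for x' y'
  proof (rule ccontr)
    assume "\<not> \<Phi> x y t \<le> \<Phi> x' y' t"
    then have "\<Psi> (x', y', t) < 0" using \<open>\<Psi> (x, y, t) \<le> 0\<close> unfolding \<Psi>_def by simp
    moreover have "continuous_on {0..t} (\<lambda>s. \<Psi> (x', y', s))"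
      by (rule continuous_on_compose2[OF \<Psi>_cont, of _ "\<lambda>s. (x', y', s)"])
        (use that in \<open>auto intro!: continuous_intros simp: triangle_prism_def\<close>)
    ultimately obtain s where "s \<in> {0..<t}" "\<Psi> (x', y', s) < 0"
      using negative_earlier_if_continuous \<open>0 < t\<close> by blast
    then show False using no_earlier[of x' y' s] that by (auto simp: triangle_prism_def)
  qed
  then obtain D where "D \<ge> 0" and "((\<lambda>s. \<Phi> x y s) has_real_derivative D) (at t)"
    using at_min xyt \<open>x < y\<close> \<open>0 < t\<close> by meson
  then have "((\<lambda>s. \<Psi> (x, y, s)) has_real_derivative D + \<epsilon> * exp t) (at t)"
    unfolding \<Psi>_def by (auto intro!: derivative_eq_intros)
  moreover have "0 < D + \<epsilon> * exp t" using \<open>D \<ge> 0\<close> \<open>0 < \<epsilon> * exp t\<close> by simp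
  ultimately obtain s where "s \<in> {0..<t}" "\<Psi> (x, y, s) < 0"
    using negative_earlier_if_deriv_pos \<open>0 < t\<close> \<open>\<Psi> (x, y, t) \<le> 0\<close> by blast
  then show False using no_earlier[of x y s] xyt by (auto simp: triangle_prism_def)
qed

lemma jump_toward_one_preserves_order:
  fixes g x y :: real
  assumes "0 \<le> g" "g \<le> 1" "0 \<le> x" "x \<le> y" "y \<le> 1"
  shows "0 \<le> x + g * (1 - x)" "x + g * (1 - x) \<le> y + g * (1 - y)" "y + g * (1 - y) \<le> 1"
proof -
  have "0 \<le> g * (1 - x)" "0 \<le> (1 - g) * (y - x)" "0 \<le> (1 - g) * (1 - y)"
    using assms by simp_all
  then show "0 \<le> x + g * (1 - x)" "x + g * (1 - x) \<le> y + g * (1 - y)" "y + g * (1 - y) \<le> 1"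
    using assms(3) by (simp_all add: algebra_simps)
qed

lemma jump_toward_zero_preserves_order:
  fixes g x y :: real
  assumes "0 \<le> g" "g \<le> 1" "0 \<le> x" "x \<le> y" "y \<le> 1"
  shows "0 \<le> x - g * x" "x - g * x \<le> y - g * y" "y - g * y \<le> 1"
proof -
  have "0 \<le> (1 - g) * x" "0 \<le> (1 - g) * (y - x)" "0 \<le> g * y"
    using assms by simp_all
  then show "0 \<le> x - g * x" "x - g * x \<le> y - g * y" "y - g * y \<le> 1"
    using assms(5) by (simp_all add: algebra_simps)
qed

locale cauchy_solution =
  fixes f0 f1 l0 l1 g0 g1 :: real
    and u ux ut uxx uxt :: "real \<Rightarrow> real \<Rightarrow> real"
  assumes f1_nonneg: "0 \<le> f1" and f1_le_f0: "f1 \<le> f0"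
    and l0_nonneg: "0 \<le> l0" and l1_nonneg: "0 \<le> l1"
    and g0_bounds: "0 \<le> g0" "g0 \<le> 1" and g1_bounds: "0 \<le> g1" "g1 \<le> 1"
    and solution: "classical_solution f0 f1 l0 l1 g0 g1 u ux ut uxx uxt"
begin

lemma u_has_derivative:
  assumes "x \<in> {0..1}" "0 \<le> t"
  shows "((\<lambda>p. u (fst p) (snd p)) has_derivative (\<lambda>(h, k). ux x t * h + ut x t * k))
           (at (x, t) within dom01)"
  using solution assms unfolding classical_solution_def dom01_def by fastforce

lemma u_continuous: "continuous_on dom01 (\<lambda>p. u (fst p) (snd p))"
  unfolding continuous_on_eq_continuous_within
proof
  fix p assume "p \<in> dom01"
  then obtain x t where "p = (x, t)" "x \<in> {0..1}" "0 \<le> t" by (auto simp: dom01_def)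
  then show "continuous (at p within dom01) (\<lambda>p. u (fst p) (snd p))"
    using has_derivative_continuous[OF u_has_derivative] by simp
qed

lemma u_has_real_derivative_x_within:
  assumes "x \<in> {0..1}" "0 \<le> t"
  shows "((\<lambda>\<xi>. u \<xi> t) has_real_derivative ux x t) (at x within {0..1})"
  using assms by (intro has_real_derivative_partial_fst[OF u_has_derivative])
    (auto simp: dom01_def)

lemma u_has_real_derivative_x:
  assumes "0 < x" "x < 1" "0 \<le> t"
  shows "((\<lambda>\<xi>. u \<xi> t) has_real_derivative ux x t) (at x)"
  using u_has_real_derivative_x_within[of x t] assms at_within_interior[of x "{0..1}"]
  by simp

lemma u_has_real_derivative_t:
  assumes "x \<in> {0..1}" "0 < t"
  shows "((\<lambda>s. u x s) has_real_derivative ut x t) (at t)"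
proof -
  have "((\<lambda>s. u x s) has_real_derivative ut x t) (at t within {0..})"
    using assms by (intro has_real_derivative_partial_snd[OF u_has_derivative])
      (auto simp: dom01_def)
  then show ?thesis using assms at_within_interior[of t "{0..}"] by simp
qed

lemma ut_eq:
  assumes "x \<in> {0..1}" "0 < t"
  shows "ut x t = l0 * f0 * (u (x + g0 * (1 - x)) t - u x t) + l1 * f1 * (u (x - g1 * x) t - u x t)
                  - (f0 - f1) * (1 - x) * x * ux x t"
proof -
  have "ut x t + (f0 - f1) * (1 - x) * x * ux x t = l0 * f0 * J0 g0 u x t + l1 * f1 * J1 g1 u x t"
    using solution assms unfolding classical_solution_def by blast
  then show ?thesis unfolding J0_def J1_def by linarith
qed

lemma u_initial: "x \<in> {0..1} \<Longrightarrow> u x 0 = x"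
  using solution unfolding classical_solution_def by blast

definition rate :: real where
  "rate = (f0 - f1) - (l0 * g0) * f0 - (l1 * g1) * f1"

definition gap :: "real \<Rightarrow> real \<Rightarrow> real \<Rightarrow> real \<Rightarrow> real \<Rightarrow> real" where
  "gap p s x y t = p * exp (rate * t) * (y - x) + s * (u y t - u x t)"

lemma gap_first_order_left:
  assumes min: "\<And>x' y'. 0 \<le> x' \<Longrightarrow> x' \<le> y' \<Longrightarrow> y' \<le> 1 \<Longrightarrow> gap p s x y t \<le> gap p s x' y' t"
    and "0 \<le> x" "x < y" "y \<le> 1" "0 \<le> t"
  shows "x * (p * exp (rate * t) + s * ux x t) = 0"
proof (cases "x = 0")
  case False
  then have "0 < x" "x < 1" using assms by auto
  have "((\<lambda>\<xi>. gap p s \<xi> y t) has_real_derivative - (p * exp (rate * t) + s * ux x t)) (at x)"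
    unfolding gap_def using u_has_real_derivative_x[OF \<open>0 < x\<close> \<open>x < 1\<close> \<open>0 \<le> t\<close>]
    by (auto intro!: derivative_eq_intros)
  moreover have "\<forall>\<xi>. \<bar>x - \<xi>\<bar> < min x (y - x) \<longrightarrow> gap p s x y t \<le> gap p s \<xi> y t"
    using min assms by auto
  moreover have "0 < min x (y - x)" using \<open>0 < x\<close> assms by simp
  ultimately have "- (p * exp (rate * t) + s * ux x t) = 0"
    by (metis DERIV_local_min)
  then show ?thesis by simp
qed simp

lemma gap_first_order_right:
  assumes min: "\<And>x' y'. 0 \<le> x' \<Longrightarrow> x' \<le> y' \<Longrightarrow> y' \<le> 1 \<Longrightarrow> gap p s x y t \<le> gap p s x' y' t"
    and "0 \<le> x" "x < y" "y \<le> 1" "0 \<le> t"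
  shows "(1 - y) * (p * exp (rate * t) + s * ux y t) = 0"
proof (cases "y = 1")
  case False
  then have "0 < y" "y < 1" using assms by auto
  have "((\<lambda>\<eta>. gap p s x \<eta> t) has_real_derivative p * exp (rate * t) + s * ux y t) (at y)"
    unfolding gap_def using u_has_real_derivative_x[OF \<open>0 < y\<close> \<open>y < 1\<close> \<open>0 \<le> t\<close>]
    by (auto intro!: derivative_eq_intros)
  moreover have "\<forall>\<eta>. \<bar>y - \<eta>\<bar> < min (y - x) (1 - y) \<longrightarrow> gap p s x y t \<le> gap p s x \<eta> t"
    using min assms by auto
  moreover have "0 < min (y - x) (1 - y)" using \<open>y < 1\<close> assms by simp
  ultimately have "p * exp (rate * t) + s * ux y t = 0"
    by (metis DERIV_local_min)
  then show ?thesis by simp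
qed simp

lemma gap_has_real_derivative_t:
  assumes "x \<in> {0..1}" "y \<in> {0..1}" "0 < t"
  shows "((\<lambda>\<tau>. gap p s x y \<tau>) has_real_derivative
           p * rate * exp (rate * t) * (y - x) + s * (ut y t - ut x t)) (at t)"
  unfolding gap_def
  using u_has_real_derivative_t[OF assms(1,3)] u_has_real_derivative_t[OF assms(2,3)]
  by (auto intro!: derivative_eq_intros)

lemma gap_time_derivative_eq:
  assumes left: "x * (p * exp (rate * t) + s * ux x t) = 0"
    and right: "(1 - y) * (p * exp (rate * t) + s * ux y t) = 0"
    and "x \<in> {0..1}" "y \<in> {0..1}" "0 < t"
  shows "p * rate * exp (rate * t) * (y - x) + s * (ut y t - ut x t)
       = p * exp (rate * t) * (f0 - f1) * (y - x) * (2 - x - y)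
         + l0 * f0 * (gap p s (x + g0 * (1 - x)) (y + g0 * (1 - y)) t - gap p s x y t)
         + l1 * f1 * (gap p s (x - g1 * x) (y - g1 * y) t - gap p s x y t)"
  using left right ut_eq[OF assms(3,5)] ut_eq[OF assms(4,5)]
  unfolding gap_def rate_def by algebra

lemma gap_time_derivative_nonneg_at_spatial_min:
  assumes "0 \<le> p" "0 \<le> p + s"
    and min: "\<And>x' y'. 0 \<le> x' \<Longrightarrow> x' \<le> y' \<Longrightarrow> y' \<le> 1 \<Longrightarrow> gap p s x y t \<le> gap p s x' y' t"
    and xy: "0 \<le> x" "x < y" "y \<le> 1" and "0 < t"
  shows "\<exists>D\<ge>0. ((\<lambda>\<tau>. gap p s x y \<tau>) has_real_derivative D) (at t)"
proof -
  have "x \<in> {0..1}" "y \<in> {0..1}" using xy by auto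
  note left = gap_first_order_left[OF min xy less_imp_le[OF \<open>0 < t\<close>]]
  note right = gap_first_order_right[OF min xy less_imp_le[OF \<open>0 < t\<close>]]
  have "gap p s x y t \<le> gap p s (x + g0 * (1 - x)) (y + g0 * (1 - y)) t"
    by (intro min jump_toward_one_preserves_order[OF g0_bounds]) (use xy in auto)
  then have jump0: "0 \<le> l0 * f0 * (gap p s (x + g0 * (1 - x)) (y + g0 * (1 - y)) t - gap p s x y t)"
    using l0_nonneg f1_nonneg f1_le_f0 by simp
  have "gap p s x y t \<le> gap p s (x - g1 * x) (y - g1 * y) t"
    by (intro min jump_toward_zero_preserves_order[OF g1_bounds]) (use xy in auto)
  then have jump1: "0 \<le> l1 * f1 * (gap p s (x - g1 * x) (y - g1 * y) t - gap p s x y t)"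
    using l1_nonneg f1_nonneg by simp
  have selection: "0 \<le> p * exp (rate * t) * (f0 - f1) * (y - x) * (2 - x - y)"
    using \<open>0 \<le> p\<close> f1_le_f0 xy by simp
  have "0 \<le> p * rate * exp (rate * t) * (y - x) + s * (ut y t - ut x t)"
    using gap_time_derivative_eq[OF left right \<open>x \<in> {0..1}\<close> \<open>y \<in> {0..1}\<close> \<open>0 < t\<close>]
      selection jump0 jump1 by linarith
  then show ?thesis
    using gap_has_real_derivative_t[OF \<open>x \<in> {0..1}\<close> \<open>y \<in> {0..1}\<close> \<open>0 < t\<close>] by blast
qed

lemma gap_nonneg:
  assumes "0 \<le> p" "0 \<le> p + s" and "0 \<le> x" "x \<le> y" "y \<le> 1" "0 \<le> t"
  shows "0 \<le> gap p s x y t"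
proof (rule nonneg_by_minimum_principle[where \<Phi> = "gap p s"])
  have "continuous_on triangle_prism (\<lambda>q. u (fst (snd q)) (snd (snd q)))"
    by (rule continuous_on_compose2[OF u_continuous, of _ "\<lambda>q. (fst (snd q), snd (snd q))", simplified])
      (auto intro!: continuous_intros simp: dom01_def triangle_prism_def)
  moreover have "continuous_on triangle_prism (\<lambda>q. u (fst q) (snd (snd q)))"
    by (rule continuous_on_compose2[OF u_continuous, of _ "\<lambda>q. (fst q, snd (snd q))", simplified])
      (auto intro!: continuous_intros simp: dom01_def triangle_prism_def)
  ultimately show "continuous_on triangle_prism (\<lambda>(x, y, t). gap p s x y t)"
    unfolding gap_def split_def by (intro continuous_intros)
  show "0 \<le> gap p s x y 0" if "0 \<le> x" "x \<le> y" "y \<le> 1" for x y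
  proof -
    have "gap p s x y 0 = (p + s) * (y - x)"
      using that u_initial[of x] u_initial[of y] by (simp add: gap_def algebra_simps)
    then show ?thesis using that \<open>0 \<le> p + s\<close> by simp
  qed
  show "0 \<le> gap p s x x t" for x t by (simp add: gap_def)
  show "\<exists>D\<ge>0. ((\<lambda>\<tau>. gap p s x y \<tau>) has_real_derivative D) (at t)"
    if "0 \<le> x" "x < y" "y \<le> 1" "0 < t"
      and "\<And>x' y'. 0 \<le> x' \<Longrightarrow> x' \<le> y' \<Longrightarrow> y' \<le> 1 \<Longrightarrow> gap p s x y t \<le> gap p s x' y' t"
    for x y t
    by (rule gap_time_derivative_nonneg_at_spatial_min) (use assms(1,2) that in auto)
  show "(x, y, t) \<in> triangle_prism"
    using assms(3-6) by (simp add: triangle_prism_def)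
qed

lemma u_mono_on:
  assumes "0 \<le> t"
  shows "mono_on {0..1} (\<lambda>\<xi>. u \<xi> t)"
proof (rule mono_onI)
  fix a b :: real assume "a \<in> {0..1}" "b \<in> {0..1}" "a \<le> b"
  then show "u a t \<le> u b t" using gap_nonneg[of 0 1 a b t] assms by (simp add: gap_def)
qed

lemma exp_minus_u_mono_on:
  assumes "0 \<le> t"
  shows "mono_on {0..1} (\<lambda>\<xi>. exp (rate * t) * \<xi> - u \<xi> t)"
proof (rule mono_onI)
  fix a b :: real assume "a \<in> {0..1}" "b \<in> {0..1}" "a \<le> b"
  then show "exp (rate * t) * a - u a t \<le> exp (rate * t) * b - u b t"
    using gap_nonneg[of 1 "-1" a b t] assms by (simp add: gap_def algebra_simps)
qed

lemma ux_nonneg: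
  assumes "x \<in> {0..1}" "0 \<le> t"
  shows "0 \<le> ux x t"
proof (rule mono_on_imp_deriv_within_nonneg[OF u_mono_on[OF assms(2)] u_has_real_derivative_x_within[OF assms] assms(1)])
  show "at x within {0..1} \<noteq> bot" using assms(1) by (simp add: trivial_limit_within)
qed

lemma ux_le_exp:
  assumes "x \<in> {0..1}" "0 \<le> t"
  shows "ux x t \<le> exp (rate * t)"
proof -
  have "((\<lambda>\<xi>. exp (rate * t) * \<xi> - u \<xi> t) has_real_derivative exp (rate * t) - ux x t)
          (at x within {0..1})"
    using u_has_real_derivative_x_within[OF assms] by (auto intro!: derivative_eq_intros)
  then have "0 \<le> exp (rate * t) - ux x t"
  proof (rule mono_on_imp_deriv_within_nonneg[OF exp_minus_u_mono_on[OF assms(2)] _ assms(1)])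
    show "at x within {0..1} \<noteq> bot" using assms(1) by (simp add: trivial_limit_within)
  qed
  then show ?thesis by simp
qed

end

theorem lemma4p2:
  fixes f0 f1 l0 l1 g0 g1 :: real
    and u ux ut uxx uxt :: "real \<Rightarrow> real \<Rightarrow> real"
  assumes "f0 > 0" and "f1 \<ge> 0" and "f0 - f1 > 0"
    and "l0 \<ge> 0" and "l1 \<ge> 0"
    and "0 < g0" and "g0 \<le> 1" and "0 < g1" and "g1 \<le> 1"
    and "classical_solution f0 f1 l0 l1 g0 g1 u ux ut uxx uxt"
  shows "\<forall>t>0. \<forall>x\<in>{0..1}.
           0 \<le> ux x t \<and>
           ux x t \<le> exp (((f0 - f1) - (l0 * g0) * f0 - (l1 * g1) * f1) * t)"
proof -
  interpret cauchy_solution f0 f1 l0 l1 g0 g1 u ux ut uxx uxt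
    using assms by unfold_locales auto
  show ?thesis
    using ux_nonneg ux_le_exp unfolding rate_def by (meson less_imp_le)
qed

end
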